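(* Let $L\ge 1$ be an integer and $g$ a real polynomial of degree at most $L$ with $g(0)=g'(0)=0$. Let $a<0<b$, $\gamma\ge1$, and $0<\delta\le\min\{-a/4,\,b/4\}$ with \[ \delta<\max\Big\{\frac{b-a}{16L^2},\ \frac{\sqrt{|ab|}}{8L}\Big\}, \] and suppose $|g(x)|\le\gamma|x|+\delta$ for all $x\in[a,b]$. Then $g(x)\le 2\gamma|x|$ for all $x\in[a,b]$. *)

theory Defs
  imports "HOL-Computational_Algebra.Polynomial"
begin

end

theory Submission
  imports Defs "HOL-Complex_Analysis.Conformal_Mappings"
begin

text \<open>Write \<open>g = x h\<close> with \<open>h 0 = 0\<close> and \<open>degree h \<le> L - 1\<close>, and let \<open>x\<^sub>0\<close> maximise \<open>\<bar>h\<bar>\<close>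
  on \<open>[a, b]\<close>. If \<open>\<gamma> \<bar>x\<^sub>0\<bar> \<ge> \<delta>\<close>, the hypothesis at \<open>x\<^sub>0\<close> already gives \<open>\<bar>h x\<^sub>0\<bar> \<le> 2 \<gamma>\<close>.
  Otherwise \<open>\<bar>x\<^sub>0\<bar> < \<delta>\<close>, and the mean value theorem gives \<open>\<bar>h x\<^sub>0\<bar> \<le> \<delta> \<bar>h' \<xi>\<bar>\<close> for some \<open>\<xi>\<close>
  near \<open>0\<close>, far from both endpoints. Bernstein's inequality
  \<open>\<bar>h' \<xi>\<bar> sqrt ((\<xi> - a) (b - \<xi>)) \<le> e L max \<bar>h\<bar>\<close> then forces \<open>max \<bar>h\<bar> = 0\<close> because \<open>\<delta>\<close> is small.

  Bernstein's inequality with the constant \<open>e (n + 1)\<close> comes from the Joukowski map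
  \<open>J w = (w + 1/w) / 2\<close>, which sends the unit circle onto \<open>[-1, 1]\<close>: \<open>w\<^sup>n p (J w)\<close> is a polynomial,
  so by maximum modulus \<open>p \<circ> J\<close> is bounded by \<open>e M\<close> on the annulus \<open>1 \<plusminus> 1/(n + 1)\<close>, and
  Cauchy's estimate on the circle of radius \<open>1/(n + 1)\<close> about \<open>u + i sqrt (1 - u\<^sup>2)\<close> bounds the
  derivative of \<open>p \<circ> J\<close> there, which is \<open>p' u\<close> times \<open>sqrt (1 - u\<^sup>2)\<close>.\<close>

lemma poly_map_poly_of_real:
  "poly (map_poly of_real p) (of_real x :: 'a::{real_algebra_1,comm_ring_1}) = of_real (poly p x)"
  by (induction p) (auto simp: map_poly_pCons)

lemma pderiv_map_poly_of_real:
  "pderiv (map_poly (of_real :: real \<Rightarrow> 'a::{real_algebra_1,idom}) p) = map_poly of_real (pderiv p)"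
  by (rule poly_eqI) (simp add: coeff_pderiv coeff_map_poly)

lemma power_one_plus_le_exp1:
  fixes x :: real
  assumes "0 \<le> x" "real n * x \<le> 1"
  shows "(1 + x) ^ n \<le> exp 1"
proof -
  have "(1 + x) ^ n \<le> exp x ^ n"
    using assms by (intro power_mono) (auto simp: exp_ge_add_one_self)
  also have "\<dots> = exp (real n * x)" by (simp add: exp_of_nat_mult)
  also have "\<dots> \<le> exp 1" using assms by simp
  finally show ?thesis .
qed

definition joukowski :: "complex \<Rightarrow> complex" where
  "joukowski z = (z + 1 / z) / 2"

lemma joukowski_inverse: "joukowski (1 / z) = joukowski z"
  by (simp add: joukowski_def add.commute)

lemma unit_circle_inverse_eq_cnj:
  assumes "norm w = 1"
  shows "1 / w = cnj w"
proof -
  have "w * cnj w = 1" using complex_norm_square[of w] assms by simp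
  moreover have "w \<noteq> 0" using assms by auto
  ultimately show ?thesis by (simp add: field_simps)
qed

lemma joukowski_unit_circle:
  assumes "norm w = 1"
  shows "joukowski w = of_real (Re w)"
  using unit_circle_inverse_eq_cnj[OF assms] by (simp add: joukowski_def complex_add_cnj)

lemma joukowski_has_field_derivative:
  assumes "w \<noteq> 0"
  shows "(joukowski has_field_derivative (1 - 1 / w^2) / 2) (at w)"
  unfolding joukowski_def [abs_def] using assms
  by (auto intro!: derivative_eq_intros simp: field_simps power2_eq_square)

lemma norm_joukowski_derivative_unit_circle:
  assumes "norm w = 1"
  shows "norm ((1 - 1 / w^2) / 2) = \<bar>Im w\<bar>"
proof -
  have "1 / w = cnj w" by (rule unit_circle_inverse_eq_cnj[OF assms])
  moreover have "w * cnj w = 1" using complex_norm_square[of w] assms by simp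
  moreover have "1 / w^2 = (1 / w)^2" by (simp add: power_divide)
  ultimately have "1 - 1 / w^2 = cnj w * (w - cnj w)"
    by (simp add: power2_eq_square algebra_simps)
  also have "\<dots> = cnj w * (2 * \<i> * of_real (Im w))"
    by (simp add: complex_diff_cnj)
  finally show ?thesis using assms by (simp add: norm_mult)
qed

text \<open>Agrees with \<open>w ^ n * poly p (joukowski w)\<close> off \<open>0\<close>, but has no pole there.\<close>
definition joukowski_cleared :: "complex poly \<Rightarrow> nat \<Rightarrow> complex \<Rightarrow> complex" where
  "joukowski_cleared p n w = (\<Sum>k\<le>n. coeff p k * w ^ (n - k) * ((w^2 + 1) / 2) ^ k)"

lemma joukowski_cleared_eq:
  assumes "degree p \<le> n" "w \<noteq> 0"
  shows "joukowski_cleared p n w = w ^ n * poly p (joukowski w)"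
proof -
  have "w ^ n * joukowski w ^ k = w ^ (n - k) * ((w^2 + 1) / 2) ^ k" if "k \<le> n" for k
  proof -
    have "w * joukowski w = (w^2 + 1) / 2"
      using assms(2) by (simp add: joukowski_def field_simps power2_eq_square)
    then have "w ^ k * joukowski w ^ k = ((w^2 + 1) / 2) ^ k"
      by (simp only: power_mult_distrib[symmetric])
    moreover have "w ^ n = w ^ (n - k) * w ^ k" using that by (simp flip: power_add)
    ultimately show ?thesis by (simp add: mult.assoc)
  qed
  moreover have "poly p z = (\<Sum>k\<le>n. coeff p k * z ^ k)" for z
    unfolding poly_altdef
    by (rule sum.mono_neutral_left) (use assms in \<open>auto simp: coeff_eq_0\<close>)
  ultimately show ?thesis
    by (simp add: joukowski_cleared_def sum_distrib_left algebra_simps)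
qed

lemma joukowski_cleared_holomorphic: "joukowski_cleared p n holomorphic_on S"
  unfolding joukowski_cleared_def by (intro holomorphic_intros) auto

lemma poly_joukowski_bound_disc:
  assumes "degree p \<le> n" and bound: "\<And>v. \<bar>v\<bar> \<le> 1 \<Longrightarrow> norm (poly p (of_real v)) \<le> M"
    and "norm w \<le> 1" "w \<noteq> 0"
  shows "norm w ^ n * norm (poly p (joukowski w)) \<le> M"
proof -
  have "norm (joukowski_cleared p n z) \<le> M" if "norm z = 1" for z
  proof -
    have "z \<noteq> 0" using that by auto
    then show ?thesis
      using bound[of "Re z"] abs_Re_le_cmod[of z] that
      by (simp add: joukowski_cleared_eq[OF assms(1)] joukowski_unit_circle norm_mult norm_power)
  qed
  then have "norm (joukowski_cleared p n w) \<le> M"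
    using maximum_modulus_frontier[of "joukowski_cleared p n" "cball 0 1" M w] assms(3)
    by (auto intro: joukowski_cleared_holomorphic holomorphic_on_imp_continuous_on)
  then show ?thesis using assms by (simp add: joukowski_cleared_eq norm_mult norm_power)
qed

lemma poly_joukowski_bound_annulus:
  assumes deg: "degree p \<le> n" and bound: "\<And>v. \<bar>v\<bar> \<le> 1 \<Longrightarrow> norm (poly p (of_real v)) \<le> M"
    and "z \<noteq> 0" "1 - 1 / (real n + 1) \<le> norm z" "norm z \<le> 1 + 1 / (real n + 1)"
  shows "norm (poly p (joukowski z)) \<le> exp 1 * M"
proof -
  have M: "0 \<le> M" using order_trans[OF norm_ge_zero bound[of 0]] by simp
  show ?thesis
  proof (cases "norm z \<le> 1")
    case True
    have "1 \<le> exp 1 * norm z ^ n"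
    proof (cases "n = 0")
      case False
      have "1 \<le> norm z * (1 + 1 / real n)"
        using assms(4) False by (simp add: field_simps)
      then have "1 \<le> (norm z * (1 + 1 / real n)) ^ n" by (rule one_le_power)
      also have "\<dots> \<le> norm z ^ n * exp 1"
        unfolding power_mult_distrib using False
        by (intro mult_left_mono power_one_plus_le_exp1) auto
      finally show ?thesis by (simp add: mult.commute)
    qed simp
    then have "norm (poly p (joukowski z)) \<le> (exp 1 * norm z ^ n) * norm (poly p (joukowski z))"
      using mult_right_mono[of 1 _ "norm (poly p (joukowski z))"] by simp
    also have "\<dots> = exp 1 * (norm z ^ n * norm (poly p (joukowski z)))" by simp
    also have "\<dots> \<le> exp 1 * M"
      using poly_joukowski_bound_disc[OF deg bound True assms(3)] by simp
    finally show ?thesis .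
  next
    case False
    have "norm (1 / z) ^ n * norm (poly p (joukowski z)) \<le> M"
      using poly_joukowski_bound_disc[OF deg bound, of "1 / z"] False assms(3)
      by (simp add: joukowski_inverse norm_divide)
    then have "norm (poly p (joukowski z)) \<le> M * norm z ^ n"
      using assms(3) by (simp add: norm_divide power_divide field_simps)
    also have "\<dots> \<le> M * (1 + 1 / (real n + 1)) ^ n"
      using assms(5) M by (intro mult_left_mono power_mono) auto
    also have "\<dots> \<le> M * exp 1"
      using M by (intro mult_left_mono power_one_plus_le_exp1) (auto simp: field_simps)
    finally show ?thesis by (simp add: mult.commute)
  qed
qed

lemma norm_deriv_poly_joukowski_unit_circle:
  fixes p :: "real poly"
  assumes w: "norm w = 1"
  shows "norm (deriv (\<lambda>z. poly (map_poly of_real p) (joukowski z)) w)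
    = \<bar>poly (pderiv p) (Re w)\<bar> * \<bar>Im w\<bar>"
proof -
  have "((\<lambda>z. poly (map_poly of_real p) (joukowski z)) has_field_derivative
      poly (pderiv (map_poly of_real p)) (joukowski w) * ((1 - 1 / w^2) / 2)) (at w)"
    using w by (intro DERIV_chain2[OF poly_DERIV joukowski_has_field_derivative]) auto
  then show ?thesis
    by (simp only: DERIV_imp_deriv norm_mult joukowski_unit_circle[OF w] pderiv_map_poly_of_real
        poly_map_poly_of_real norm_of_real norm_joukowski_derivative_unit_circle[OF w])
qed

lemma bernstein_inequality:
  fixes p :: "real poly"
  assumes deg: "degree p \<le> n" and bound: "\<And>v. \<bar>v\<bar> \<le> 1 \<Longrightarrow> \<bar>poly p v\<bar> \<le> M"
    and u: "\<bar>u\<bar> < 1"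
  shows "\<bar>poly (pderiv p) u\<bar> * sqrt (1 - u^2) \<le> exp 1 * (real n + 1) * M"
proof (cases "n = 0")
  case True
  then have "pderiv p = 0" using deg by (simp add: pderiv_eq_0_iff)
  then show ?thesis using order_trans[OF abs_ge_zero bound[of 0]] by simp
next
  case False
  define pc :: "complex poly" where "pc = map_poly of_real p"
  define F where "F = (\<lambda>z. poly pc (joukowski z))"
  define s where "s = sqrt (1 - u^2)"
  define w where "w = Complex u s"
  define r where "r = 1 / (real n + 1)"
  have s: "s^2 = 1 - u^2" using u by (simp add: s_def abs_square_le_1)
  have w: "norm w = 1" using s by (simp add: w_def cmod_def)
  have r: "0 < r" "r \<le> 1 / 2" using False by (auto simp: r_def field_simps)
  have degc: "degree pc \<le> n" using deg by (simp add: pc_def degree_map_poly)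
  have boundc: "norm (poly pc (of_real v)) \<le> M" if "\<bar>v\<bar> \<le> 1" for v
    using bound[OF that] by (simp add: pc_def poly_map_poly_of_real)
  have nonzero: "z \<noteq> 0" if "z \<in> cball w r" for z
    using that w r by (auto simp: dist_norm)
  have "norm (F z) \<le> exp 1 * M" if "norm (w - z) = r" for z
    unfolding F_def
  proof (rule poly_joukowski_bound_annulus[OF degc boundc])
    show "z \<noteq> 0" using nonzero that by (simp add: dist_norm)
    show "1 - 1 / (real n + 1) \<le> norm z" "norm z \<le> 1 + 1 / (real n + 1)"
      using norm_triangle_ineq2[of w z] norm_triangle_ineq2[of z w] that w
      by (auto simp: r_def norm_minus_commute)
  qed
  moreover have "F holomorphic_on ball w r" "continuous_on (cball w r) F"
    unfolding F_def joukowski_def using nonzero w r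
    by (auto intro!: holomorphic_intros continuous_intros)
  ultimately have "norm (deriv F w) \<le> exp 1 * M / r"
    using Cauchy_inequality[of F w r "exp 1 * M" 1] r by simp
  moreover have "norm (deriv F w) = \<bar>poly (pderiv p) u\<bar> * s"
    using norm_deriv_poly_joukowski_unit_circle[OF w] u
    by (simp add: F_def pc_def w_def s_def abs_square_le_1)
  ultimately show ?thesis by (simp add: r_def s_def mult_ac)
qed

lemma bernstein_inequality_interval:
  fixes h :: "real poly"
  assumes deg: "degree h \<le> n" and bound: "\<And>y. a \<le> y \<Longrightarrow> y \<le> b \<Longrightarrow> \<bar>poly h y\<bar> \<le> M"
    and x: "a < x" "x < b"
  shows "\<bar>poly (pderiv h) x\<bar> * sqrt ((x - a) * (b - x)) \<le> exp 1 * (real n + 1) * M"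
proof -
  define c where "c = (a + b) / 2"
  define d where "d = (b - a) / 2"
  define q where "q = pcompose h [:c, d:]"
  define u where "u = (x - c) / d"
  have d: "0 < d" using x by (simp add: d_def)
  have xu: "x = c + d * u" using d by (simp add: u_def)
  have "degree q \<le> n"
    using degree_pcompose_le[of h "[:c, d:]"] deg d by (simp add: q_def)
  moreover have "\<bar>poly q v\<bar> \<le> M" if "\<bar>v\<bar> \<le> 1" for v
  proof -
    have "\<bar>d * v\<bar> \<le> d" using that d by (simp add: abs_mult mult_le_cancel_left1)
    moreover have "a = c - d" "b = c + d" by (simp_all add: c_def d_def field_simps)
    ultimately have "a \<le> c + d * v" "c + d * v \<le> b" by (auto simp: abs_le_iff)
    then show ?thesis using bound by (simp add: q_def poly_pcompose mult.commute)
  qed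
  moreover have "\<bar>u\<bar> < 1" using x d by (auto simp: u_def c_def d_def field_simps)
  ultimately have bernstein: "\<bar>poly (pderiv q) u\<bar> * sqrt (1 - u^2) \<le> exp 1 * (real n + 1) * M"
    by (rule bernstein_inequality)
  have "(x - a) * (b - x) = d^2 - (x - c)^2"
    by (simp add: c_def d_def field_simps power2_eq_square)
  also have "\<dots> = d^2 * (1 - u^2)"
    using xu by (simp add: algebra_simps power2_eq_square)
  finally have "sqrt ((x - a) * (b - x)) = d * sqrt (1 - u^2)"
    using d by (simp add: real_sqrt_mult)
  moreover have "\<bar>poly (pderiv q) u\<bar> = \<bar>poly (pderiv h) x\<bar> * d"
    using d xu by (simp add: q_def pderiv_pcompose poly_pcompose pderiv_pCons abs_mult mult.commute)
  ultimately show ?thesis using bernstein by (simp add: mult_ac)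
qed

lemma poly_double_root_0_factor:
  fixes g :: "'a::idom poly"
  assumes "poly g 0 = 0" "poly (pderiv g) 0 = 0"
  obtains h where "g = [:0, 1:] * h" "poly h 0 = 0" "degree h = degree g - 1"
proof -
  obtain h where g: "g = [:0, 1:] * h"
    using assms(1) poly_eq_0_iff_dvd[of g 0] by (auto elim: dvdE)
  have "pderiv g = h + [:0, 1:] * pderiv h" by (simp add: g pderiv_mult pderiv_pCons)
  then have "poly h 0 = 0" using assms(2) by simp
  moreover have "degree h = degree g - 1"
    by (cases "h = 0") (simp_all add: g degree_mult_eq)
  ultimately show ?thesis using g that by blast
qed

lemma small_delta_lt_geometric_mean:
  fixes a b \<delta> L :: real
  assumes "a < 0" "0 < b" "0 < \<delta>" "\<delta> \<le> - a / 4" "\<delta> \<le> b / 4" "1 \<le> L"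
    and "\<delta> < max ((b - a) / (16 * L^2)) (sqrt \<bar>a * b\<bar> / (8 * L))"
  shows "4 * \<delta> * exp 1 * L < 3 * sqrt \<bar>a * b\<bar>"
proof -
  define S where "S = sqrt \<bar>a * b\<bar>"
  have ab: "0 < - a * b" using mult_neg_pos[OF assms(1,2)] by simp
  then have S: "0 < S" "S^2 = - a * b" by (simp_all add: S_def abs_of_neg)
  have e: "0 < exp (1::real)" "exp (1::real) < 3" using e_less_272 by auto
  have L: "0 < 16 * L^2" using assms by simp
  consider "\<delta> < S / (8 * L)" | "16 * L^2 * \<delta> < b - a"
    using assms(7) pos_less_divide_eq[OF L, of \<delta> "b - a"]
    by (auto simp: S_def less_max_iff_disj mult.commute)
  then show ?thesis
  proof cases
    case 1
    then have "\<delta> * (4 * exp 1 * L) < S / (8 * L) * (4 * exp 1 * L)"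
      by (rule mult_strict_right_mono) (use assms e in auto)
    also have "\<dots> = exp 1 * S / 2" using assms by (simp add: field_simps)
    also have "\<dots> < 3 * S" using e S by simp
    finally show ?thesis by (simp add: S_def mult_ac)
  next
    case 2
    have "\<delta> * (b - a) \<le> - a * b / 2"
    proof (cases "- a \<le> b")
      case True
      have "\<delta> * (b - a) \<le> (- a / 4) * (2 * b)"
        by (rule mult_mono) (use True assms in auto)
      then show ?thesis by simp
    next
      case False
      have "\<delta> * (b - a) \<le> (b / 4) * (- 2 * a)"
        by (rule mult_mono) (use False assms in auto)
      then show ?thesis by simp
    qed
    have "(4 * \<delta> * exp 1 * L)^2 = exp 1 ^ 2 * \<delta> * (16 * L^2 * \<delta>)"
      by (simp add: power2_eq_square)
    also have "\<dots> < exp 1 ^ 2 * \<delta> * (b - a)"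
      by (rule mult_strict_left_mono) (use 2 assms in auto)
    also have "\<dots> \<le> exp 1 ^ 2 * (- a * b / 2)"
      using \<open>\<delta> * (b - a) \<le> - a * b / 2\<close> by (subst mult.assoc, rule mult_left_mono) simp_all
    also have "\<dots> < 3 ^ 2 * (- a * b / 2)"
      by (rule mult_strict_right_mono[OF power_strict_mono]) (use ab e in auto)
    also have "\<dots> \<le> (3 * S)^2" using S ab by (simp add: power_mult_distrib)
    finally have "4 * \<delta> * exp 1 * L < 3 * S"
      by (rule power2_less_imp_less) (use S in simp)
    then show ?thesis by (simp add: S_def)
  qed
qed

lemma poly_max_abs_near_root_eq_0:
  fixes h :: "real poly"
  assumes deg: "degree h \<le> n" and root: "poly h 0 = 0"
    and max: "\<And>y. a \<le> y \<Longrightarrow> y \<le> b \<Longrightarrow> \<bar>poly h y\<bar> \<le> \<bar>poly h x\<bar>"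
    and near: "\<bar>x\<bar> < \<delta>" "\<delta> \<le> - a / 4" "\<delta> \<le> b / 4"
    and small: "4 * \<delta> * exp 1 * (real n + 1) < 3 * sqrt \<bar>a * b\<bar>"
  shows "poly h x = 0"
proof -
  obtain \<xi> where \<xi>: "\<xi> \<in> {min 0 x..max 0 x}"
    and mvt: "poly h x - poly h 0 = (x - 0) * poly (pderiv h) \<xi>"
    using poly_MVT'[of 0 x "{min 0 x..max 0 x}" h] by auto
  define M where "M = \<bar>poly h x\<bar>"
  define D where "D = \<bar>poly (pderiv h) \<xi>\<bar>"
  define Q where "Q = sqrt ((\<xi> - a) * (b - \<xi>))"
  define S where "S = sqrt \<bar>a * b\<bar>"
  have \<xi>_bounds: "\<bar>\<xi>\<bar> < \<delta>" using \<xi> near by auto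
  have "M = \<bar>x\<bar> * D" using mvt root by (simp add: M_def D_def abs_mult)
  then have MD: "M \<le> \<delta> * D" using near by (simp add: D_def mult_right_mono)
  have DQ: "D * Q \<le> exp 1 * (real n + 1) * M"
    unfolding D_def Q_def M_def
    by (rule bernstein_inequality_interval[OF deg max]) (use \<xi>_bounds near in auto)
  have "(3/4)^2 * \<bar>a * b\<bar> \<le> (\<xi> - a) * (b - \<xi>)"
  proof -
    have "3/4 * (- a) \<le> \<xi> - a" "3/4 * b \<le> b - \<xi>" using \<xi>_bounds near by auto
    then have "(3/4 * (- a)) * (3/4 * b) \<le> (\<xi> - a) * (b - \<xi>)"
      by (rule mult_mono) (use near \<xi>_bounds in auto)
    moreover have "\<bar>a * b\<bar> = - a * b" using \<xi>_bounds near by (simp add: abs_mult)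
    ultimately show ?thesis by (simp add: power2_eq_square algebra_simps)
  qed
  then have SQ: "3/4 * S \<le> Q"
    unfolding S_def Q_def using real_sqrt_le_mono by (fastforce simp: real_sqrt_mult)
  have "0 \<le> S" by (simp add: S_def)
  with SQ have "3/4 * S * M \<le> Q * (\<delta> * D)"
    by (intro mult_mono MD) (auto simp: M_def)
  also have "\<dots> = \<delta> * (D * Q)" by simp
  also have "\<dots> \<le> \<delta> * (exp 1 * (real n + 1) * M)"
    by (rule mult_left_mono) (use DQ near in auto)
  finally have "3/4 * S * M \<le> (\<delta> * exp 1 * (real n + 1)) * M" by (simp add: mult_ac)
  moreover have "\<not> 3/4 * S \<le> \<delta> * exp 1 * (real n + 1)" using small by (simp add: S_def)
  ultimately have "\<not> 0 < M" using mult_right_le_imp_le by blast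
  then show ?thesis by (simp add: M_def)
qed

lemma poly_abs_le_of_weighted_bound:
  fixes h :: "real poly"
  assumes deg: "degree h \<le> n" and root: "poly h 0 = 0"
    and "1 \<le> \<gamma>" "0 < \<delta>" "\<delta> \<le> - a / 4" "\<delta> \<le> b / 4"
    and small: "4 * \<delta> * exp 1 * (real n + 1) < 3 * sqrt \<bar>a * b\<bar>"
    and weighted: "\<And>y. y \<in> {a..b} \<Longrightarrow> \<bar>y\<bar> * \<bar>poly h y\<bar> \<le> \<gamma> * \<bar>y\<bar> + \<delta>"
    and y: "y \<in> {a..b}"
  shows "\<bar>poly h y\<bar> \<le> 2 * \<gamma>"
proof -
  have "\<exists>x\<in>{a..b}. \<forall>y\<in>{a..b}. \<bar>poly h y\<bar> \<le> \<bar>poly h x\<bar>"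
    by (rule continuous_attains_sup) (use assms in \<open>auto intro!: continuous_intros\<close>)
  then obtain x where x: "x \<in> {a..b}" and max: "\<And>y. y \<in> {a..b} \<Longrightarrow> \<bar>poly h y\<bar> \<le> \<bar>poly h x\<bar>"
    by blast
  have "\<bar>poly h x\<bar> \<le> 2 * \<gamma>"
  proof (cases "\<delta> \<le> \<gamma> * \<bar>x\<bar>")
    case True
    with weighted[OF x] have "\<bar>x\<bar> * \<bar>poly h x\<bar> \<le> \<bar>x\<bar> * (2 * \<gamma>)"
      by (simp add: algebra_simps)
    moreover have "x \<noteq> 0" using True assms(4) by auto
    ultimately show ?thesis by simp
  next
    case False
    moreover have "\<bar>x\<bar> \<le> \<gamma> * \<bar>x\<bar>" using mult_right_mono[OF assms(3), of "\<bar>x\<bar>"] by simp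
    ultimately have "\<bar>x\<bar> < \<delta>" by simp
    then have "poly h x = 0"
      by (rule poly_max_abs_near_root_eq_0[OF deg root max, rotated]) (use assms in auto)
    then show ?thesis using assms(3) by simp
  qed
  then show ?thesis using max[OF y] by simp
qed

theorem lemma3p14:
  fixes L :: nat and g :: "real poly" and a b \<gamma> \<delta> :: real
  assumes "L \<ge> 1"
    and "degree g \<le> L"
    and "poly g 0 = 0" and "poly (pderiv g) 0 = 0"
    and "a < 0" and "0 < b"
    and "\<gamma> \<ge> 1"
    and "0 < \<delta>" and "\<delta> \<le> min (- a / 4) (b / 4)"
    and "\<delta> < max ((b - a) / (16 * real L ^ 2)) (sqrt \<bar>a * b\<bar> / (8 * real L))"
    and "\<forall>x\<in>{a..b}. \<bar>poly g x\<bar> \<le> \<gamma> * \<bar>x\<bar> + \<delta>"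
  shows "\<forall>x\<in>{a..b}. poly g x \<le> 2 * \<gamma> * \<bar>x\<bar>"
proof -
  obtain h where g: "g = [:0, 1:] * h" and "poly h 0 = 0" and "degree h = degree g - 1"
    using poly_double_root_0_factor assms(3,4) by blast
  moreover have "4 * \<delta> * exp 1 * (real (L - 1) + 1) < 3 * sqrt \<bar>a * b\<bar>"
    using small_delta_lt_geometric_mean[of a b \<delta> "real L"] assms by auto
  moreover have "\<bar>y\<bar> * \<bar>poly h y\<bar> \<le> \<gamma> * \<bar>y\<bar> + \<delta>" if "y \<in> {a..b}" for y
    using assms(11) that by (simp add: g abs_mult)
  ultimately have bound: "\<bar>poly h y\<bar> \<le> 2 * \<gamma>" if "y \<in> {a..b}" for y
    using poly_abs_le_of_weighted_bound[of h "L - 1" \<gamma> \<delta> a b y] that assms by auto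
  show ?thesis
  proof
    fix y assume y: "y \<in> {a..b}"
    have "poly g y \<le> \<bar>y\<bar> * \<bar>poly h y\<bar>" by (simp add: g flip: abs_mult)
    also have "\<dots> \<le> \<bar>y\<bar> * (2 * \<gamma>)"
      by (rule mult_left_mono) (use bound[OF y] in auto)
    finally show "poly g y \<le> 2 * \<gamma> * \<bar>y\<bar>" by (simp add: mult_ac)
  qed
qed

end
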